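(* In the setting of the context, assume (A2), (A2') and (A3). Then for every $j\in\{1,\dots,p\}$, $$\big|\,\|R\|_{\mathcal{G}_j,2}-\|\alpha\|_{\mathcal{G}_j,2}\big|^2\le 4M^2v_n\,r(\mathcal{G}_j)+2(1+\nu)\,\|P_{V_{\mathcal{G}_j}}W\|_2^2.$$
   Context: Model $Y=\tilde X\alpha+W$ with $\tilde X\in\mathbb{R}^{n\times k}$, $\alpha\in\mathbb{R}^k$, $W\in\mathbb{R}^n$ a noise vector with i.i.d. $\mathcal{N}(0,\sigma^2)$ entries. $\mathcal{G}_1,\dots,\mathcal{G}_p$ is a partition of $\{1,\dots,k\}$, $t_j=\#\mathcal{G}_j$, $t^*=\max_j t_j$; each index $\ell$ is written $\ell=(j,t)$ with $j$ its group and $t\in\{1,\dots,t_j\}$ its rank inside $\mathcal{G}_j$. $R_\ell=\sum_{i=1}^n Y_i\tilde X_{i\ell}$. Norms: $\|u\|_{\mathcal{I},1}=\sum_{\ell\in\mathcal{I}}|u_\ell|$, $\|u\|_{\mathcal{I},2}^2=\sum_{\ell\in\mathcal{I}}u_\ell^2$. $\Gamma=\tilde X^t\tilde X$; $V_{\mathcal{I}}$ is the span of the columns of $\tilde X$ indexed by $\mathcal{I}$ and $P_{V_{\mathcal{I}}}$ the orthogonal projection onto it. $\gamma_{BT}=\sup\{|\Gamma_{(j,t)(j',t')}|: t\neq t'\}$, $\gamma_{BG}=\sup\{|\Gamma_{(j,t)(j',t)}|: j\ne j'\}$; $r(\mathcal{I})=\#(\mathcal{I})\gamma_{BT}^2+\#\{j:\exists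 t,(j,t)\in\mathcal{I}\}\gamma_{BG}^2$; $\tau^*=t^*\gamma_{BT}+\gamma_{BG}$. Assumptions: (A2) $\Gamma_{\ell\ell}=1$ for all $\ell$; (A2') $\tau^*\le\nu$ for a fixed $\nu\in(0,1)$; (A3) there exist $q\in(0,1]$, $M>0$ and $v_n>0$ with $\sum_{j=1}^p\|\alpha\|_{\mathcal{G}_j,1}^q\le M^q v_n^{q/2}$. *)

theory Defs
  imports "HOL-Analysis.Analysis"
begin

text \<open>Columns of the design matrix are indexed by a finite type 'k (the k columns),
  observations by a finite type 'n (so vectors live in real^'n).
  X l is the l-th column of the matrix tilde X.\<close>

definition Gram :: "('k \<Rightarrow> real^'n) \<Rightarrow> 'k \<Rightarrow> 'k \<Rightarrow> real" where
  "Gram X l l' = X l \<bullet> X l'"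

definition response :: "('k::finite \<Rightarrow> real^'n) \<Rightarrow> ('k \<Rightarrow> real) \<Rightarrow> real^'n \<Rightarrow> real^'n" where
  "response X \<alpha> W = (\<Sum>l\<in>UNIV. \<alpha> l *\<^sub>R X l) + W"

definition Rstat :: "('k::finite \<Rightarrow> real^'n) \<Rightarrow> ('k \<Rightarrow> real) \<Rightarrow> real^'n \<Rightarrow> 'k \<Rightarrow> real" where
  "Rstat X \<alpha> W l = response X \<alpha> W \<bullet> X l"

definition norm1_on :: "'k set \<Rightarrow> ('k \<Rightarrow> real) \<Rightarrow> real" where
  "norm1_on I u = (\<Sum>l\<in>I. \<bar>u l\<bar>)"

definition norm2_on :: "'k set \<Rightarrow> ('k \<Rightarrow> real) \<Rightarrow> real" where
  "norm2_on I u = sqrt (\<Sum>l\<in>I. (u l)\<^sup>2)"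

text \<open>Groups G 0, ..., G (p-1) form a partition of the column index set (nonempty blocks);
  rk l is the rank t of l inside its group, a bijection of G j onto {1..t_j}.\<close>
definition is_group_partition :: "nat \<Rightarrow> (nat \<Rightarrow> 'k set) \<Rightarrow> bool" where
  "is_group_partition p G \<longleftrightarrow>
     (\<forall>j<p. G j \<noteq> {}) \<and> (\<forall>j<p. \<forall>j'<p. j \<noteq> j' \<longrightarrow> G j \<inter> G j' = {}) \<and>
     (\<Union>j<p. G j) = UNIV"

definition grp :: "nat \<Rightarrow> (nat \<Rightarrow> 'k set) \<Rightarrow> 'k \<Rightarrow> nat" where
  "grp p G l = (THE j. j < p \<and> l \<in> G j)"

definition is_rank :: "nat \<Rightarrow> (nat \<Rightarrow> 'k set) \<Rightarrow> ('k \<Rightarrow> nat) \<Rightarrow> bool" where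
  "is_rank p G rk \<longleftrightarrow> (\<forall>j<p. bij_betw rk (G j) {1..card (G j)})"

definition tstar :: "nat \<Rightarrow> (nat \<Rightarrow> 'k set) \<Rightarrow> nat" where
  "tstar p G = Max (insert 0 ((\<lambda>j. card (G j)) ` {..<p}))"

text \<open>Suprema over finite sets of nonnegative numbers; the supremum of the empty set is taken as 0.\<close>
definition gamma_BT :: "('k::finite \<Rightarrow> real^'n) \<Rightarrow> ('k \<Rightarrow> nat) \<Rightarrow> real" where
  "gamma_BT X rk = Max (insert 0 {\<bar>Gram X l l'\<bar> | l l'. rk l \<noteq> rk l'})"

definition gamma_BG :: "('k::finite \<Rightarrow> real^'n) \<Rightarrow> nat \<Rightarrow> (nat \<Rightarrow> 'k set) \<Rightarrow> ('k \<Rightarrow> nat) \<Rightarrow> real" where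
  "gamma_BG X p G rk = Max (insert 0 {\<bar>Gram X l l'\<bar> | l l'. rk l = rk l' \<and> grp p G l \<noteq> grp p G l'})"

definition rfun :: "('k::finite \<Rightarrow> real^'n) \<Rightarrow> nat \<Rightarrow> (nat \<Rightarrow> 'k set) \<Rightarrow> ('k \<Rightarrow> nat) \<Rightarrow> 'k set \<Rightarrow> real" where
  "rfun X p G rk I = real (card I) * (gamma_BT X rk)\<^sup>2
      + real (card {j. \<exists>l\<in>I. grp p G l = j}) * (gamma_BG X p G rk)\<^sup>2"

definition tau_star :: "('k::finite \<Rightarrow> real^'n) \<Rightarrow> nat \<Rightarrow> (nat \<Rightarrow> 'k set) \<Rightarrow> ('k \<Rightarrow> nat) \<Rightarrow> real" where
  "tau_star X p G rk = real (tstar p G) * gamma_BT X rk + gamma_BG X p G rk"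

definition orth_proj :: "(real^'n) set \<Rightarrow> real^'n \<Rightarrow> real^'n" where
  "orth_proj V w = (THE q. q \<in> V \<and> (\<forall>v\<in>V. (w - q) \<bullet> v = 0))"

end

theory Submission
  imports Defs
begin

text \<open>Subtracting \<open>\<alpha>\<^sub>\<ell>\<close> from \<open>R\<^sub>\<ell> = \<Sum>\<^sub>\<ell>' \<Gamma>\<^sub>\<ell>\<^sub>\<ell>' \<alpha>\<^sub>\<ell>' + (X\<^sup>t W)\<^sub>\<ell>\<close> leaves three terms.
  The coordinates \<open>\<ell>'\<close> of a different rank contribute at most \<open>\<gamma>\<^sub>B\<^sub>T \<parallel>\<alpha>\<parallel>\<^sub>1\<close> to every entry.
  The coordinates of the same rank lie in other groups, because the rank is injective on each group;
  each of them has at most one partner in \<open>G\<^sub>j\<close>, so over \<open>G\<^sub>j\<close> their contribution has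
  \<open>\<ell>\<^sup>1\<close>-norm at most \<open>\<gamma>\<^sub>B\<^sub>G \<parallel>\<alpha>\<parallel>\<^sub>1\<close>. The noise term only sees \<open>P W\<close>, and the Gram matrix of the group has
  operator norm at most \<open>1 + (t\<^sub>j - 1) \<gamma>\<^sub>B\<^sub>T \<le> 1 + \<nu>\<close>, which bounds its squared norm by \<open>(1 + \<nu>) \<parallel>P W\<parallel>\<^sup>2\<close>.
  Finally \<open>q \<le> 1\<close> makes \<open>x \<mapsto> x\<^sup>q\<close> subadditive, so (A3) gives \<open>\<parallel>\<alpha>\<parallel>\<^sub>1 \<le> M \<surd>v\<close>, and
  \<open>(a + b + c)\<^sup>2 \<le> 4a\<^sup>2 + 4b\<^sup>2 + 2c\<^sup>2\<close> combines the three bounds.\<close>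

lemma orth_proj_span:
  fixes S :: "(real^'n) set"
  shows "orth_proj (span S) w \<in> span S \<and> (\<forall>v\<in>span S. (w - orth_proj (span S) w) \<bullet> v = 0)"
proof -
  obtain y z where y: "y \<in> span S" and z: "\<And>v. v \<in> span S \<Longrightarrow> orthogonal z v" and w: "w = y + z"
    using orthogonal_subspace_decomp_exists by blast
  have P: "y \<in> span S \<and> (\<forall>v\<in>span S. (w - y) \<bullet> v = 0)"
    using y z w by (simp add: orthogonal_def)
  have "q = y" if "q \<in> span S \<and> (\<forall>v\<in>span S. (w - q) \<bullet> v = 0)" for q
  proof -
    have "y - q \<in> span S" using y that by (simp add: span_diff)
    then have "(w - q) \<bullet> (y - q) = 0" "(w - y) \<bullet> (y - q) = 0" using that P by auto
    then have "(y - q) \<bullet> (y - q) = 0"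
      by (metis (no_types, lifting) diff_add_cancel diff_diff_eq2 inner_diff_left inner_commute right_minus_eq)
    then show ?thesis by simp
  qed
  then have "orth_proj (span S) w = y"
    unfolding orth_proj_def using P by (rule the_equality[rotated])
  then show ?thesis using P by simp
qed

lemma inner_orth_proj_span:
  fixes S :: "(real^'n) set"
  assumes "x \<in> S"
  shows "orth_proj (span S) w \<bullet> x = w \<bullet> x"
proof -
  have "(w - orth_proj (span S) w) \<bullet> x = 0"
    using orth_proj_span assms by (blast intro: span_base)
  then show ?thesis by (simp add: inner_diff_left)
qed

lemma sum_inner_sq_le_orth_proj:
  fixes X :: "'k \<Rightarrow> real^'n"
  assumes frame: "\<And>c. (norm (\<Sum>l\<in>I. c l *\<^sub>R X l))\<^sup>2 \<le> K * (\<Sum>l\<in>I. (c l)\<^sup>2)"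
    and K: "0 \<le> K"
  shows "(\<Sum>l\<in>I. (W \<bullet> X l)\<^sup>2) \<le> K * (norm (orth_proj (span (X ` I)) W))\<^sup>2"
proof -
  define u where "u = orth_proj (span (X ` I)) W"
  define y where "y = (\<Sum>l\<in>I. (W \<bullet> X l) *\<^sub>R X l)"
  define S where "S = (\<Sum>l\<in>I. (W \<bullet> X l)\<^sup>2)"
  have S0: "0 \<le> S" unfolding S_def by (simp add: sum_nonneg)
  have "S = (\<Sum>l\<in>I. (W \<bullet> X l) * (u \<bullet> X l))"
    unfolding S_def u_def by (intro sum.cong refl) (simp add: inner_orth_proj_span power2_eq_square)
  also have "\<dots> = u \<bullet> y" unfolding y_def by (simp add: inner_sum_right)
  also have "\<dots> \<le> norm u * norm y" by (rule Cauchy_Schwarz_ineq2[THEN order_trans[OF abs_ge_self]])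
  finally have "S\<^sup>2 \<le> (norm u)\<^sup>2 * (norm y)\<^sup>2"
    using S0 by (metis power_mono power_mult_distrib)
  also have "\<dots> \<le> (norm u)\<^sup>2 * (K * S)"
    using frame[of "\<lambda>l. W \<bullet> X l"] unfolding y_def S_def by (intro mult_left_mono) auto
  finally have "S * S \<le> (K * (norm u)\<^sup>2) * S" by (simp add: power2_eq_square algebra_simps)
  then have "S \<le> K * (norm u)\<^sup>2"
    using S0 K by (cases "S = 0") (auto simp: mult_le_cancel_right)
  then show ?thesis unfolding S_def u_def .
qed

lemma quadratic_form_le_off_diagonal_bound:
  fixes c :: "'k \<Rightarrow> real" and Gm :: "'k \<Rightarrow> 'k \<Rightarrow> real"
  assumes fin: "finite I" and diag: "\<And>l. l \<in> I \<Longrightarrow> Gm l l = 1"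
    and off: "\<And>l l'. l \<in> I \<Longrightarrow> l' \<in> I \<Longrightarrow> l \<noteq> l' \<Longrightarrow> \<bar>Gm l l'\<bar> \<le> g" and g: "0 \<le> g"
  shows "(\<Sum>l\<in>I. \<Sum>l'\<in>I. c l * c l' * Gm l l') \<le> (1 + (real (card I) - 1) * g) * (\<Sum>l\<in>I. (c l)\<^sup>2)"
proof -
  let ?S = "\<Sum>l\<in>I. (c l)\<^sup>2"
  have term_le: "2 * (c l * c l' * Gm l l')
      \<le> g * (c l)\<^sup>2 + g * (c l')\<^sup>2 + (if l = l' then 2 * (1 - g) * (c l)\<^sup>2 else 0)"
    if "l \<in> I" "l' \<in> I" for l l'
  proof (cases "l = l'")
    case True
    then show ?thesis using diag that by (simp add: power2_eq_square algebra_simps)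
  next
    case False
    have "c l * c l' * Gm l l' \<le> \<bar>c l * c l'\<bar> * \<bar>Gm l l'\<bar>" by (metis abs_ge_self abs_mult)
    also have "\<dots> \<le> \<bar>c l * c l'\<bar> * g" using off[OF that False] by (intro mult_left_mono) auto
    finally have "2 * (c l * c l' * Gm l l') \<le> (2 * \<bar>c l\<bar> * \<bar>c l'\<bar>) * g" by (simp add: abs_mult)
    also have "\<dots> \<le> ((c l)\<^sup>2 + (c l')\<^sup>2) * g"
      using g sum_squares_bound[of "\<bar>c l\<bar>" "\<bar>c l'\<bar>"] by (intro mult_right_mono) auto
    finally show ?thesis using False by (simp add: algebra_simps)
  qed
  have "2 * (\<Sum>l\<in>I. \<Sum>l'\<in>I. c l * c l' * Gm l l')
      \<le> (\<Sum>l\<in>I. \<Sum>l'\<in>I. g * (c l)\<^sup>2 + g * (c l')\<^sup>2 + (if l = l' then 2 * (1 - g) * (c l)\<^sup>2 else 0))"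
    unfolding sum_distrib_left using term_le by (intro sum_mono) auto
  also have "\<dots> = 2 * ((1 + (real (card I) - 1) * g) * ?S)"
  proof -
    have "(\<Sum>l\<in>I. \<Sum>l'\<in>I. g * (c l)\<^sup>2) = g * real (card I) * ?S"
      and "(\<Sum>l\<in>I. \<Sum>l'\<in>I. g * (c l')\<^sup>2) = g * real (card I) * ?S"
      and "(\<Sum>l\<in>I. \<Sum>l'\<in>I. if l = l' then 2 * (1 - g) * (c l)\<^sup>2 else 0) = 2 * (1 - g) * ?S"
      using fin by (simp_all add: sum_distrib_left sum_distrib_right algebra_simps)
    then show ?thesis unfolding sum.distrib by (simp only:) (simp add: algebra_simps)
  qed
  finally show ?thesis by simp
qed
lemma norm_sum_scaleR_sq_le_off_diagonal_bound:
  fixes X :: "'k \<Rightarrow> 'a::real_inner"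
  assumes "finite I" and "\<And>l. l \<in> I \<Longrightarrow> X l \<bullet> X l = 1"
    and "\<And>l l'. l \<in> I \<Longrightarrow> l' \<in> I \<Longrightarrow> l \<noteq> l' \<Longrightarrow> \<bar>X l \<bullet> X l'\<bar> \<le> g" and "0 \<le> g"
  shows "(norm (\<Sum>l\<in>I. c l *\<^sub>R X l))\<^sup>2 \<le> (1 + (real (card I) - 1) * g) * (\<Sum>l\<in>I. (c l)\<^sup>2)"
proof -
  have "(norm (\<Sum>l\<in>I. c l *\<^sub>R X l))\<^sup>2 = (\<Sum>l\<in>I. \<Sum>l'\<in>I. c l * c l' * (X l' \<bullet> X l))"
    by (simp add: power2_norm_eq_inner inner_sum_left inner_sum_right sum_distrib_left algebra_simps)
  also have "\<dots> \<le> (1 + (real (card I) - 1) * g) * (\<Sum>l\<in>I. (c l)\<^sup>2)"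
    by (rule quadratic_form_le_off_diagonal_bound) (use assms in \<open>auto simp: inner_commute\<close>)
  finally show ?thesis .
qed

lemma powr_sum_le_sum_powr:
  fixes a :: "'a \<Rightarrow> real"
  assumes nonneg: "\<And>i. i \<in> J \<Longrightarrow> 0 \<le> a i" and q: "0 < q" "q \<le> 1"
  shows "(\<Sum>i\<in>J. a i) powr q \<le> (\<Sum>i\<in>J. a i powr q)"
proof (cases "(\<Sum>i\<in>J. a i) = 0")
  case True
  then show ?thesis using nonneg by (simp add: sum_nonneg)
next
  case False
  define s where "s = (\<Sum>i\<in>J. a i)"
  have "s \<ge> 0" unfolding s_def using nonneg by (simp add: sum_nonneg)
  with False have s: "s > 0" unfolding s_def by simp
  then have fin: "finite J" unfolding s_def using sum.infinite by fastforce
  have "1 = (\<Sum>i\<in>J. a i / s)" using s unfolding s_def by (simp flip: sum_divide_distrib)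
  also have "\<dots> \<le> (\<Sum>i\<in>J. (a i / s) powr q)"
  proof (rule sum_mono)
    fix i assume i: "i \<in> J"
    have "a i \<le> s" unfolding s_def using nonneg i fin by (intro member_le_sum) auto
    then have "0 \<le> a i / s" "a i / s \<le> 1" using s nonneg i by auto
    then have "(a i / s) powr 1 \<le> (a i / s) powr q" using q by (intro powr_mono') auto
    then show "a i / s \<le> (a i / s) powr q" using \<open>0 \<le> a i / s\<close> by (simp only: powr_one)
  qed
  also have "\<dots> = (\<Sum>i\<in>J. a i powr q) / s powr q"
    using nonneg s by (simp add: powr_divide sum_divide_distrib)
  finally show ?thesis using s unfolding s_def by (simp add: field_simps)
qed

lemma sum_le_of_sum_powr_le:
  fixes a :: "'a \<Rightarrow> real"
  assumes nonneg: "\<And>i. i \<in> J \<Longrightarrow> 0 \<le> a i" and q: "0 < q" "q \<le> 1" and B: "0 \<le> B"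
    and le: "(\<Sum>i\<in>J. a i powr q) \<le> B powr q"
  shows "(\<Sum>i\<in>J. a i) \<le> B"
proof -
  have "(\<Sum>i\<in>J. a i) powr q \<le> B powr q"
    using powr_sum_le_sum_powr[OF nonneg q] le by (rule order_trans)
  then show ?thesis
    using powr_less_mono2[of q B "\<Sum>i\<in>J. a i"] q B by linarith
qed

lemma grp_eqI:
  assumes "is_group_partition p G" and "j < p" and "l \<in> G j"
  shows "grp p G l = j"
  unfolding grp_def
proof (rule the_equality)
  show "j < p \<and> l \<in> G j" using assms by simp
  show "j' = j" if "j' < p \<and> l \<in> G j'" for j'
    using that assms unfolding is_group_partition_def by blast
qed

lemma sum_eq_sum_over_partition:
  fixes G :: "nat \<Rightarrow> 'k::finite set"
  assumes "is_group_partition p G"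
  shows "(\<Sum>l\<in>UNIV. f l) = (\<Sum>j<p. \<Sum>l\<in>G j. f l)"
proof -
  have "(UNIV :: 'k::finite set) = (\<Union>j<p. G j)" using assms unfolding is_group_partition_def by simp
  then have "(\<Sum>l\<in>UNIV. f l) = (\<Sum>l\<in>(\<Union>j<p. G j). f l)" by simp
  also have "\<dots> = (\<Sum>j<p. \<Sum>l\<in>G j. f l)"
    by (rule sum.UNION_disjoint) (use assms in \<open>auto simp: is_group_partition_def\<close>)
  finally show ?thesis .
qed

lemma finite_pair_image: "finite {f l l' | l l'. P l l'}" for f :: "'k::finite \<Rightarrow> 'k \<Rightarrow> 'b"
  by (rule finite_subset[of _ "(\<lambda>(l, l'). f l l') ` UNIV"]) auto

lemma gamma_BT_nonneg: "0 \<le> gamma_BT X rk"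
  unfolding gamma_BT_def by (rule Max_ge) (auto simp: finite_pair_image)

lemma gamma_BG_nonneg: "0 \<le> gamma_BG X p G rk"
  unfolding gamma_BG_def by (rule Max_ge) (auto simp: finite_pair_image)

lemma abs_Gram_le_gamma_BT: "rk l \<noteq> rk l' \<Longrightarrow> \<bar>Gram X l l'\<bar> \<le> gamma_BT X rk"
  unfolding gamma_BT_def by (rule Max_ge) (auto simp: finite_pair_image)

lemma abs_Gram_le_gamma_BG:
  "rk l = rk l' \<Longrightarrow> grp p G l \<noteq> grp p G l' \<Longrightarrow> \<bar>Gram X l l'\<bar> \<le> gamma_BG X p G rk"
  unfolding gamma_BG_def by (rule Max_ge) (auto simp: finite_pair_image)

lemma rfun_group:
  assumes "is_group_partition p G" and "j < p"
  shows "rfun X p G rk (G j) = real (card (G j)) * (gamma_BT X rk)\<^sup>2 + (gamma_BG X p G rk)\<^sup>2"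
proof -
  have "{j'. \<exists>l\<in>G j. grp p G l = j'} = {j}"
    using assms grp_eqI[OF assms(1,2)] unfolding is_group_partition_def by auto
  then show ?thesis unfolding rfun_def by simp
qed

definition cross_rank_term ::
    "('k::finite \<Rightarrow> real^'n) \<Rightarrow> ('k \<Rightarrow> nat) \<Rightarrow> ('k \<Rightarrow> real) \<Rightarrow> 'k \<Rightarrow> real" where
  "cross_rank_term X rk \<alpha> l = (\<Sum>l'\<in>UNIV. if rk l' \<noteq> rk l then \<alpha> l' * Gram X l l' else 0)"

definition same_rank_term ::
    "('k::finite \<Rightarrow> real^'n) \<Rightarrow> ('k \<Rightarrow> nat) \<Rightarrow> ('k \<Rightarrow> real) \<Rightarrow> 'k \<Rightarrow> real" where
  "same_rank_term X rk \<alpha> l = (\<Sum>l'\<in>UNIV. if rk l' = rk l \<and> l' \<noteq> l then \<alpha> l' * Gram X l l' else 0)"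

lemma Rstat_decomposition:
  assumes "Gram X l l = 1"
  shows "Rstat X \<alpha> W l - \<alpha> l = cross_rank_term X rk \<alpha> l + same_rank_term X rk \<alpha> l + W \<bullet> X l"
proof -
  have split: "\<alpha> l' * Gram X l l' = (if l' = l then \<alpha> l else 0)
      + (if rk l' \<noteq> rk l then \<alpha> l' * Gram X l l' else 0)
      + (if rk l' = rk l \<and> l' \<noteq> l then \<alpha> l' * Gram X l l' else 0)" for l'
    using assms by auto
  have "Rstat X \<alpha> W l = (\<Sum>l'\<in>UNIV. \<alpha> l' * (X l' \<bullet> X l)) + W \<bullet> X l"
    unfolding Rstat_def response_def by (simp add: inner_add_left inner_sum_left)
  also have "\<dots> = (\<Sum>l'\<in>UNIV. \<alpha> l' * Gram X l l') + W \<bullet> X l"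
    unfolding Gram_def by (simp add: inner_commute)
  also have "\<dots> = \<alpha> l + cross_rank_term X rk \<alpha> l + same_rank_term X rk \<alpha> l + W \<bullet> X l"
    unfolding cross_rank_term_def same_rank_term_def by (subst split) (simp only: sum.distrib, simp)
  finally show ?thesis by simp
qed

lemma abs_cross_rank_term_le: "\<bar>cross_rank_term X rk \<alpha> l\<bar> \<le> gamma_BT X rk * (\<Sum>l'\<in>UNIV. \<bar>\<alpha> l'\<bar>)"
proof -
  have "\<bar>cross_rank_term X rk \<alpha> l\<bar> \<le> (\<Sum>l'\<in>UNIV. \<bar>if rk l' \<noteq> rk l then \<alpha> l' * Gram X l l' else 0\<bar>)"
    unfolding cross_rank_term_def by (rule sum_abs)
  also have "\<dots> \<le> (\<Sum>l'\<in>UNIV. gamma_BT X rk * \<bar>\<alpha> l'\<bar>)"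
  proof (rule sum_mono)
    fix l'
    have "rk l' \<noteq> rk l \<Longrightarrow> \<bar>\<alpha> l'\<bar> * \<bar>Gram X l l'\<bar> \<le> \<bar>\<alpha> l'\<bar> * gamma_BT X rk"
      by (intro mult_left_mono abs_Gram_le_gamma_BT) auto
    then show "\<bar>if rk l' \<noteq> rk l then \<alpha> l' * Gram X l l' else 0\<bar> \<le> gamma_BT X rk * \<bar>\<alpha> l'\<bar>"
      using gamma_BT_nonneg[of X rk] by (auto simp: abs_mult mult.commute)
  qed
  finally show ?thesis by (simp add: sum_distrib_left)
qed

lemma L2_set_cross_rank_term_sq_le:
  "(L2_set (cross_rank_term X rk \<alpha>) I)\<^sup>2 \<le> real (card I) * (gamma_BT X rk)\<^sup>2 * (\<Sum>l\<in>UNIV. \<bar>\<alpha> l\<bar>)\<^sup>2"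
proof -
  have "(L2_set (cross_rank_term X rk \<alpha>) I)\<^sup>2 = (\<Sum>l\<in>I. (cross_rank_term X rk \<alpha> l)\<^sup>2)"
    unfolding L2_set_def by (simp add: sum_nonneg)
  also have "\<dots> \<le> (\<Sum>l\<in>I. (gamma_BT X rk * (\<Sum>l\<in>UNIV. \<bar>\<alpha> l\<bar>))\<^sup>2)"
  proof (rule sum_mono)
    fix l
    have "0 \<le> gamma_BT X rk * (\<Sum>l\<in>UNIV. \<bar>\<alpha> l\<bar>)" by (simp add: gamma_BT_nonneg sum_nonneg)
    then show "(cross_rank_term X rk \<alpha> l)\<^sup>2 \<le> (gamma_BT X rk * (\<Sum>l\<in>UNIV. \<bar>\<alpha> l\<bar>))\<^sup>2"
      using abs_cross_rank_term_le by (simp add: power2_le_iff_abs_le)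
  qed
  finally show ?thesis by (simp add: power_mult_distrib)
qed

lemma abs_same_rank_term_le:
  assumes part: "is_group_partition p G" and rank: "is_rank p G rk" and j: "j < p" and l: "l \<in> G j"
  shows "\<bar>same_rank_term X rk \<alpha> l\<bar> \<le> (\<Sum>l'\<in>UNIV. if rk l' = rk l then gamma_BG X p G rk * \<bar>\<alpha> l'\<bar> else 0)"
proof -
  have "\<bar>same_rank_term X rk \<alpha> l\<bar> \<le> (\<Sum>l'\<in>UNIV. \<bar>if rk l' = rk l \<and> l' \<noteq> l then \<alpha> l' * Gram X l l' else 0\<bar>)"
    unfolding same_rank_term_def by (rule sum_abs)
  also have "\<dots> \<le> (\<Sum>l'\<in>UNIV. if rk l' = rk l then gamma_BG X p G rk * \<bar>\<alpha> l'\<bar> else 0)"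
  proof (rule sum_mono)
    fix l'
    show "\<bar>if rk l' = rk l \<and> l' \<noteq> l then \<alpha> l' * Gram X l l' else 0\<bar>
        \<le> (if rk l' = rk l then gamma_BG X p G rk * \<bar>\<alpha> l'\<bar> else 0)"
    proof (cases "rk l' = rk l \<and> l' \<noteq> l")
      case True
      obtain j' where j': "j' < p" "l' \<in> G j'" using part unfolding is_group_partition_def by blast
      have "l' \<notin> G j"
        using True l rank j unfolding is_rank_def bij_betw_def by (auto dest: inj_onD)
      then have "grp p G l \<noteq> grp p G l'" using grp_eqI[OF part] j l j' by auto
      then have "\<bar>\<alpha> l'\<bar> * \<bar>Gram X l l'\<bar> \<le> \<bar>\<alpha> l'\<bar> * gamma_BG X p G rk"
        using True by (intro mult_left_mono abs_Gram_le_gamma_BG) auto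
      then show ?thesis using True by (simp add: abs_mult mult.commute)
    qed (simp add: gamma_BG_nonneg)
  qed
  finally show ?thesis .
qed

lemma sum_abs_same_rank_term_le:
  assumes part: "is_group_partition p G" and rank: "is_rank p G rk" and j: "j < p"
  shows "(\<Sum>l\<in>G j. \<bar>same_rank_term X rk \<alpha> l\<bar>) \<le> gamma_BG X p G rk * (\<Sum>l\<in>UNIV. \<bar>\<alpha> l\<bar>)"
proof -
  let ?g = "gamma_BG X p G rk"
  have "(\<Sum>l\<in>G j. \<bar>same_rank_term X rk \<alpha> l\<bar>)
      \<le> (\<Sum>l\<in>G j. \<Sum>l'\<in>UNIV. if rk l' = rk l then ?g * \<bar>\<alpha> l'\<bar> else 0)"
    using abs_same_rank_term_le[OF part rank j] by (rule sum_mono)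
  also have "\<dots> = (\<Sum>l'\<in>UNIV. real (card {l\<in>G j. rk l = rk l'}) * (?g * \<bar>\<alpha> l'\<bar>))"
  proof -
    have "(\<Sum>l\<in>G j. if rk l' = rk l then ?g * \<bar>\<alpha> l'\<bar> else 0)
        = real (card {l\<in>G j. rk l = rk l'}) * (?g * \<bar>\<alpha> l'\<bar>)" for l'
      by (simp add: sum.If_cases eq_commute[of "rk l'"] Int_def)
    then show ?thesis by (subst sum.swap) simp
  qed
  also have "\<dots> \<le> (\<Sum>l'\<in>UNIV. ?g * \<bar>\<alpha> l'\<bar>)"
  proof (rule sum_mono)
    fix l'
    have "inj_on rk (G j)" using rank j unfolding is_rank_def bij_betw_def by blast
    then have "card {l\<in>G j. rk l = rk l'} \<le> Suc 0"
      by (subst card_le_Suc0_iff_eq) (auto, metis inj_onD)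
    then show "real (card {l\<in>G j. rk l = rk l'}) * (?g * \<bar>\<alpha> l'\<bar>) \<le> ?g * \<bar>\<alpha> l'\<bar>"
      by (intro mult_left_le_one_le) (auto simp: gamma_BG_nonneg)
  qed
  finally show ?thesis by (simp add: sum_distrib_left)
qed

lemma L2_set_same_rank_term_sq_le:
  assumes "is_group_partition p G" and "is_rank p G rk" and "j < p"
  shows "(L2_set (same_rank_term X rk \<alpha>) (G j))\<^sup>2 \<le> (gamma_BG X p G rk)\<^sup>2 * (\<Sum>l\<in>UNIV. \<bar>\<alpha> l\<bar>)\<^sup>2"
proof -
  have "L2_set (same_rank_term X rk \<alpha>) (G j) \<le> gamma_BG X p G rk * (\<Sum>l\<in>UNIV. \<bar>\<alpha> l\<bar>)"
    using L2_set_le_sum_abs sum_abs_same_rank_term_le[OF assms] by (rule order_trans)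
  then show ?thesis by (simp add: power_mult_distrib[symmetric] power_mono)
qed

lemma card_group_le_tstar: "j < p \<Longrightarrow> card (G j) \<le> tstar p G"
  unfolding tstar_def by (auto intro!: Max_ge)

lemma abs_norm2_on_diff_le: "\<bar>norm2_on I f - norm2_on I g\<bar> \<le> L2_set (\<lambda>l. f l - g l) I"
proof -
  have "L2_set f I \<le> L2_set (\<lambda>l. f l - g l) I + L2_set g I"
    using L2_set_triangle_ineq[of "\<lambda>l. f l - g l" g I] by simp
  moreover have "L2_set g I \<le> L2_set (\<lambda>l. g l - f l) I + L2_set f I"
    using L2_set_triangle_ineq[of "\<lambda>l. g l - f l" f I] by simp
  moreover have "L2_set (\<lambda>l. g l - f l) I = L2_set (\<lambda>l. f l - g l) I"
    unfolding L2_set_def by (simp add: power2_commute)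
  ultimately show ?thesis unfolding norm2_on_def L2_set_def[symmetric] by linarith
qed

lemma L2_set_Rstat_diff_le:
  assumes "\<forall>l. Gram X l l = 1"
  shows "L2_set (\<lambda>l. Rstat X \<alpha> W l - \<alpha> l) I
    \<le> L2_set (cross_rank_term X rk \<alpha>) I + L2_set (same_rank_term X rk \<alpha>) I + L2_set (\<lambda>l. W \<bullet> X l) I"
proof -
  have "L2_set (\<lambda>l. Rstat X \<alpha> W l - \<alpha> l) I
      = L2_set (\<lambda>l. (cross_rank_term X rk \<alpha> l + same_rank_term X rk \<alpha> l) + W \<bullet> X l) I"
    using assms by (simp add: Rstat_decomposition[where rk = rk])
  also have "\<dots> \<le> L2_set (\<lambda>l. cross_rank_term X rk \<alpha> l + same_rank_term X rk \<alpha> l) I + L2_set (\<lambda>l. W \<bullet> X l) I"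
    by (rule L2_set_triangle_ineq)
  also have "\<dots> \<le> L2_set (cross_rank_term X rk \<alpha>) I + L2_set (same_rank_term X rk \<alpha>) I + L2_set (\<lambda>l. W \<bullet> X l) I"
    using L2_set_triangle_ineq by (intro add_right_mono)
  finally show ?thesis .
qed

lemma L2_set_inner_sq_le_tau_star:
  assumes part: "is_group_partition p G" and rank: "is_rank p G rk"
    and unit: "\<forall>l. Gram X l l = 1" and j: "j < p"
  shows "(L2_set (\<lambda>l. W \<bullet> X l) (G j))\<^sup>2
    \<le> (1 + tau_star X p G rk) * (norm (orth_proj (span (X ` G j)) W))\<^sup>2"
proof -
  let ?K = "1 + (real (card (G j)) - 1) * gamma_BT X rk"
  have "G j \<noteq> {}" using part j unfolding is_group_partition_def by blast
  then have "1 \<le> card (G j)" by (simp add: Suc_le_eq card_gt_0_iff)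
  then have K: "0 \<le> ?K" by (simp add: gamma_BT_nonneg)
  have "inj_on rk (G j)" using rank j unfolding is_rank_def bij_betw_def by blast
  then have frame: "(norm (\<Sum>l\<in>G j. c l *\<^sub>R X l))\<^sup>2 \<le> ?K * (\<Sum>l\<in>G j. (c l)\<^sup>2)" for c
    using unit unfolding Gram_def
    by (intro norm_sum_scaleR_sq_le_off_diagonal_bound gamma_BT_nonneg)
      (auto simp: Gram_def[symmetric] intro!: abs_Gram_le_gamma_BT dest: inj_onD)
  have "real (card (G j)) \<le> real (tstar p G)" using card_group_le_tstar[OF j] by simp
  then have "(real (card (G j)) - 1) * gamma_BT X rk \<le> real (tstar p G) * gamma_BT X rk"
    by (intro mult_right_mono) (auto simp: gamma_BT_nonneg)
  then have "?K \<le> 1 + tau_star X p G rk"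
    using gamma_BG_nonneg[of X p G rk] unfolding tau_star_def by linarith
  have "(L2_set (\<lambda>l. W \<bullet> X l) (G j))\<^sup>2 = (\<Sum>l\<in>G j. (W \<bullet> X l)\<^sup>2)"
    unfolding L2_set_def by (simp add: sum_nonneg)
  also have "\<dots> \<le> ?K * (norm (orth_proj (span (X ` G j)) W))\<^sup>2"
    by (rule sum_inner_sq_le_orth_proj[OF frame K])
  also have "\<dots> \<le> (1 + tau_star X p G rk) * (norm (orth_proj (span (X ` G j)) W))\<^sup>2"
    using \<open>?K \<le> 1 + tau_star X p G rk\<close> by (intro mult_right_mono) auto
  finally show ?thesis .
qed

lemma sum_abs_sq_le_of_norm1_on_powr_bound:
  fixes \<alpha> :: "'k::finite \<Rightarrow> real"
  assumes part: "is_group_partition p G" and q: "0 < q" "q \<le> 1" and Mv: "0 < M" "0 < v"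
    and bound: "(\<Sum>j<p. (norm1_on (G j) \<alpha>) powr q) \<le> M powr q * v powr (q / 2)"
  shows "(\<Sum>l\<in>UNIV. \<bar>\<alpha> l\<bar>)\<^sup>2 \<le> M\<^sup>2 * v"
proof -
  have "(\<Sum>l\<in>UNIV. \<bar>\<alpha> l\<bar>) = (\<Sum>j<p. norm1_on (G j) \<alpha>)"
    unfolding norm1_on_def by (rule sum_eq_sum_over_partition[OF part])
  also have "\<dots> \<le> M * sqrt v"
  proof (rule sum_le_of_sum_powr_le[OF _ q])
    show "(\<Sum>j<p. norm1_on (G j) \<alpha> powr q) \<le> (M * sqrt v) powr q"
      using bound Mv by (simp add: powr_mult powr_powr flip: powr_half_sqrt)
  qed (use Mv in \<open>auto simp: norm1_on_def sum_nonneg\<close>)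
  finally show ?thesis
    using Mv by (metis abs_ge_zero power_mono power_mult_distrib real_sqrt_pow2 sum_nonneg less_imp_le)
qed

lemma power2_sum3_le: "(a + b + c)\<^sup>2 \<le> 4 * a\<^sup>2 + 4 * b\<^sup>2 + 2 * (c::real)\<^sup>2"
  using zero_le_power2[of "a - b"] zero_le_power2[of "a + b - c"] by (simp add: power2_eq_square algebra_simps)

theorem proposition1:
  fixes X :: "'k::finite \<Rightarrow> real^'n"
    and \<alpha> :: "'k \<Rightarrow> real"
    and W :: "real^'n"
    and p :: nat and G :: "nat \<Rightarrow> 'k set" and rk :: "'k \<Rightarrow> nat"
    and \<nu> q M v :: real
  assumes part: "is_group_partition p G"
    and rank: "is_rank p G rk"
    and A2: "\<forall>l. Gram X l l = 1"
    and nu: "0 < \<nu>" "\<nu> < 1"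
    and A2': "tau_star X p G rk \<le> \<nu>"
    and q: "0 < q" "q \<le> 1"
    and Mv: "M > 0" "v > 0"
    and A3: "(\<Sum>j<p. (norm1_on (G j) \<alpha>) powr q) \<le> M powr q * v powr (q / 2)"
    and j: "j < p"
  shows "\<bar>norm2_on (G j) (Rstat X \<alpha> W) - norm2_on (G j) \<alpha>\<bar>\<^sup>2
     \<le> 4 * M\<^sup>2 * v * rfun X p G rk (G j)
       + 2 * (1 + \<nu>) * (norm (orth_proj (span (X ` G j)) W))\<^sup>2"
proof -
  let ?\<Delta> = "norm2_on (G j) (Rstat X \<alpha> W) - norm2_on (G j) \<alpha>"
  let ?L = "\<Sum>l\<in>UNIV. \<bar>\<alpha> l\<bar>" and ?P = "(norm (orth_proj (span (X ` G j)) W))\<^sup>2"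
  define A B C where "A = L2_set (cross_rank_term X rk \<alpha>) (G j)"
    and "B = L2_set (same_rank_term X rk \<alpha>) (G j)" and "C = L2_set (\<lambda>l. W \<bullet> X l) (G j)"
  have "(1 + tau_star X p G rk) * ?P \<le> (1 + \<nu>) * ?P" using A2' by (intro mult_right_mono) auto
  with L2_set_inner_sq_le_tau_star[OF part rank A2 j] have "C\<^sup>2 \<le> (1 + \<nu>) * ?P"
    unfolding C_def by (rule order_trans)
  moreover have "A\<^sup>2 \<le> real (card (G j)) * (gamma_BT X rk)\<^sup>2 * ?L\<^sup>2"
    unfolding A_def by (rule L2_set_cross_rank_term_sq_le)
  moreover have "B\<^sup>2 \<le> (gamma_BG X p G rk)\<^sup>2 * ?L\<^sup>2"
    unfolding B_def by (rule L2_set_same_rank_term_sq_le[OF part rank j])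
  moreover have "\<bar>?\<Delta>\<bar> \<le> A + B + C"
    unfolding A_def B_def C_def using abs_norm2_on_diff_le L2_set_Rstat_diff_le[OF A2] by (rule order_trans)
  then have "\<bar>?\<Delta>\<bar>\<^sup>2 \<le> 4 * A\<^sup>2 + 4 * B\<^sup>2 + 2 * C\<^sup>2"
    using power2_sum3_le[of A B C] by (smt (verit) abs_ge_zero power_mono)
  ultimately have "\<bar>?\<Delta>\<bar>\<^sup>2 \<le> 4 * ?L\<^sup>2 * rfun X p G rk (G j) + 2 * (1 + \<nu>) * ?P"
    by (simp add: rfun_group[OF part j] algebra_simps)
  also have "\<dots> \<le> 4 * M\<^sup>2 * v * rfun X p G rk (G j) + 2 * (1 + \<nu>) * ?P"
    using sum_abs_sq_le_of_norm1_on_powr_bound[OF part q Mv A3]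
    by (intro add_right_mono mult_right_mono) (auto simp: rfun_def)
  finally show ?thesis .
qed

end
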